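(* Let $n\ge2$ and $w\in\widetilde{\mathfrak S}_n$. A total order $\rho$ of $\mathrm{Inv}_2(w)$ is a reflection order of $w$ if and only if both of the following hold: (i) for each $[x,y,z]\in\binom{\mathbb Z}{3}_n$, the restriction of $\rho$ to $P([x,y,z])\cap\mathrm{Inv}_2(w)$ is either a prefix of $P([x,y,z])$ listed in lex order, or a suffix of $P([x,y,z])$ listed in antilex order; (ii) for each pair $[x,y],[x,y+n]\in\mathrm{Inv}_2(w)$, the element $[x,y]$ appears before $[x,y+n]$ in $\rho$.
   Context: The affine symmetric group $\widetilde{\mathfrak S}_n$ consists of bijections $w:\mathbb Z\to\mathbb Z$ with $w(x+n)=w(x)+n$ and $\sum_{i=1}^n w(i)=\binom{n+1}{2}$, under composition; $s_i$ ($i\in\mathbb Z/n\mathbb Z$) swaps $j,j+1$ for all $j\equiv i\pmod n$ and fixes other integers; a reduced word for $w$ is a shortest sequence $i_1\cdots i_\ell$ with $s_{i_1}\cdots s_{i_\ell}=w$. The reflection order of a reduced word $i_1\cdots i_\ell$ is $(\rho_1,\dots,\rho_\ell)$ with $\rho_j=(w^{(j)}(i_j),w^{(j)}(i_j+1))$, $w^{(j)}=s_{i_1}\cdots s_{i_{j-1}}$; reflection orders of $w$ are those of its reduced words, viewed as total orders of $\mathrm{Inv}_2(w)$ by identifying $(a,b)$ with $[a,b]$. $\binom{\mathbb Z}{m}_n$ is the set of $m$-subsets of $\mathbb Z$ with pairwise distinct residues mod $n$, modulo simultaneous translation by multiples of $n$ (for $m>1$), each written $[x_1,\dots,x_m]$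 with $x_1<\dots<x_m$. For $X=[x_1,\dots,x_m]$, $X_i$ is $X$ with $x_i$ removed; $P(X)=\{X_1,\dots,X_m\}$, lex order $(X_m,\dots,X_1)$, antilex order $(X_1,\dots,X_m)$; a prefix is a set $\{X_m,\dots,X_i\}$, a suffix a set $\{X_i,\dots,X_1\}$ (empty set counts as both). $\mathrm{Inv}_2(w)=\{[x,y]\in\binom{\mathbb Z}{2}_n: w^{-1}(x)>w^{-1}(y)\}$. *)

theory Defs
  imports Main
begin

definition affine_perm :: "nat \<Rightarrow> (int \<Rightarrow> int) \<Rightarrow> bool" where
  "affine_perm n w \<longleftrightarrow> bij w \<and> (\<forall>x. w (x + int n) = w x + int n)
     \<and> (\<Sum>i = 1..int n. w i) = int n * (int n + 1) div 2"

definition sref :: "nat \<Rightarrow> nat \<Rightarrow> int \<Rightarrow> int" where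
  "sref n i x = (if x mod int n = int i mod int n then x + 1
                 else if x mod int n = (int i + 1) mod int n then x - 1 else x)"

text \<open>Word i_1 ... i_l (letters in {0..n-1}, representing Z/nZ) and its product s_{i_1} o ... o s_{i_l}.\<close>
definition is_word :: "nat \<Rightarrow> nat list \<Rightarrow> bool" where
  "is_word n ws \<longleftrightarrow> (\<forall>i\<in>set ws. i < n)"

definition word_prod :: "nat \<Rightarrow> nat list \<Rightarrow> int \<Rightarrow> int" where
  "word_prod n ws = foldr (\<lambda>i f. sref n i \<circ> f) ws id"

definition reduced_word :: "nat \<Rightarrow> (int \<Rightarrow> int) \<Rightarrow> nat list \<Rightarrow> bool" where
  "reduced_word n w ws \<longleftrightarrow> is_word n ws \<and> word_prod n ws = w \<and>
     (\<forall>vs. is_word n vs \<and> word_prod n vs = w \<longrightarrow> length ws \<le> length vs)"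

text \<open>Class of a finite subset of Z modulo simultaneous translation by multiples of n.\<close>
definition tcls :: "nat \<Rightarrow> int set \<Rightarrow> int set set" where
  "tcls n S = {(\<lambda>x. x + k * int n) ` S | k. True}"

definition Inv2 :: "nat \<Rightarrow> (int \<Rightarrow> int) \<Rightarrow> int set set set" where
  "Inv2 n w = {tcls n {x, y} | x y. x < y \<and> x mod int n \<noteq> y mod int n
                 \<and> inv w x > inv w y}"

definition refl_seq :: "nat \<Rightarrow> nat list \<Rightarrow> int set set list" where
  "refl_seq n ws = map (\<lambda>j. tcls n {word_prod n (take j ws) (int (ws ! j)),
                                    word_prod n (take j ws) (int (ws ! j) + 1)})
                       [0..<length ws]"

definition reflection_order :: "nat \<Rightarrow> (int \<Rightarrow> int) \<Rightarrow> int set set list \<Rightarrow> bool" where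
  "reflection_order n w \<rho> \<longleftrightarrow> (\<exists>ws. reduced_word n w ws \<and> \<rho> = refl_seq n ws)"

text \<open>A total order of a finite set, represented as a list enumerating it without repetition.\<close>
definition total_order_of :: "'a set \<Rightarrow> 'a list \<Rightarrow> bool" where
  "total_order_of A \<rho> \<longleftrightarrow> distinct \<rho> \<and> set \<rho> = A"

definition before :: "'a list \<Rightarrow> 'a \<Rightarrow> 'a \<Rightarrow> bool" where
  "before \<rho> a b \<longleftrightarrow> (\<exists>i j. i < j \<and> j < length \<rho> \<and> \<rho> ! i = a \<and> \<rho> ! j = b)"

text \<open>For X=[x,y,z]: lex order (X_3,X_2,X_1) = ([x,y],[x,z],[y,z]),
  antilex order (X_1,X_2,X_3) = ([y,z],[x,z],[x,y]).\<close>
definition lex3 :: "nat \<Rightarrow> int \<Rightarrow> int \<Rightarrow> int \<Rightarrow> int set set list" where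
  "lex3 n x y z = [tcls n {x, y}, tcls n {x, z}, tcls n {y, z}]"

definition antilex3 :: "nat \<Rightarrow> int \<Rightarrow> int \<Rightarrow> int \<Rightarrow> int set set list" where
  "antilex3 n x y z = [tcls n {y, z}, tcls n {x, z}, tcls n {x, y}]"

definition cond_i :: "nat \<Rightarrow> (int \<Rightarrow> int) \<Rightarrow> int set set list \<Rightarrow> bool" where
  "cond_i n w \<rho> \<longleftrightarrow>
    (\<forall>x y z. x < y \<and> y < z \<and> x mod int n \<noteq> y mod int n \<and> x mod int n \<noteq> z mod int n
       \<and> y mod int n \<noteq> z mod int n \<longrightarrow>
       (let R = filter (\<lambda>c. c \<in> set (lex3 n x y z) \<inter> Inv2 n w) \<rho> in
        (\<exists>k\<le>3. R = take k (lex3 n x y z)) \<or> (\<exists>k\<le>3. R = take k (antilex3 n x y z))))"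

definition cond_ii :: "nat \<Rightarrow> (int \<Rightarrow> int) \<Rightarrow> int set set list \<Rightarrow> bool" where
  "cond_ii n w \<rho> \<longleftrightarrow>
    (\<forall>x y. x < y \<and> tcls n {x, y} \<in> Inv2 n w \<and> tcls n {x, y + int n} \<in> Inv2 n w \<longrightarrow>
       before \<rho> (tcls n {x, y}) (tcls n {x, y + int n}))"

end

theory Submission
  imports Defs "HOL-Library.Sublist"
begin

(* Right multiplication by s_i toggles exactly one class of Inv_2, namely [w(i), w(i+1)], and an
   affine permutation other than the identity has a descent w(i+1) < w(i), whose removal deletes
   an inversion. Hence the length of w is |Inv_2(w)|, a word is reduced iff its reflection sequence
   has no repetition, and then the prefixes of that sequence enumerate the inversion sets of the
   prefix products. Inversion sets are biconvex on every triple [x,y,z] and contain [x,y] whenever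
   they contain [x,y+n]; growing such sets one class at a time yields (i) and (ii). Conversely,
   (i) and (ii) force the last class of rho to be the reflection of a right descent, and induction
   on the length of rho produces a reduced word. *)

section \<open>Periodic permutations of the integers\<close>

definition periodic_perm :: "nat \<Rightarrow> (int \<Rightarrow> int) \<Rightarrow> bool" where
  "periodic_perm n u \<longleftrightarrow> bij u \<and> (\<forall>x. u (x + int n) = u x + int n)"

lemma affine_perm_imp_periodic_perm: "affine_perm n w \<Longrightarrow> periodic_perm n w"
  unfolding affine_perm_def periodic_perm_def by blast

lemma periodic_perm_id: "periodic_perm n id"
  unfolding periodic_perm_def by simp

lemma periodic_perm_comp: "periodic_perm n u \<Longrightarrow> periodic_perm n v \<Longrightarrow> periodic_perm n (u \<circ> v)"
  unfolding periodic_perm_def by (auto intro: bij_comp)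

lemma periodic_perm_shift:
  assumes "periodic_perm n u"
  shows "u (x + k * int n) = u x + k * int n"
proof -
  have step: "u (y + int n) = u y + int n" for y
    using assms unfolding periodic_perm_def by blast
  show ?thesis
  proof (induction k rule: int_induct[where k = 0])
    case (step1 k)
    have "u (x + (k + 1) * int n) = u (x + k * int n) + int n"
      using step[of "x + k * int n"] by (simp add: algebra_simps)
    with step1 show ?case
      by (simp add: algebra_simps)
  next
    case (step2 k)
    have "u (x + k * int n) = u (x + (k - 1) * int n) + int n"
      using step[of "x + (k - 1) * int n"] by (simp add: algebra_simps)
    with step2 show ?case
      by (simp add: algebra_simps)
  qed simp
qed

lemma periodic_perm_inv:
  assumes "periodic_perm n u"
  shows "periodic_perm n (inv u)"
proof -
  have u: "bij u" "\<And>x. u (x + int n) = u x + int n"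
    using assms unfolding periodic_perm_def by auto
  have "inv u (x + int n) = inv u x + int n" for x
    using u by (metis bij_inv_eq_iff)
  with u show ?thesis
    unfolding periodic_perm_def by (simp add: bij_imp_bij_inv)
qed

lemma mod_eq_iff_shift: "(a::int) mod int n = b mod int n \<longleftrightarrow> (\<exists>k. b = a + k * int n)"
proof
  assume "a mod int n = b mod int n"
  then obtain k where "b - a = int n * k"
    by (metis mod_eq_dvd_iff dvd_def)
  then show "\<exists>k. b = a + k * int n"
    by (intro exI[of _ k]) (simp add: algebra_simps)
qed auto

lemma periodic_perm_mod_eq_iff:
  assumes "periodic_perm n u"
  shows "u a mod int n = u b mod int n \<longleftrightarrow> a mod int n = b mod int n"
proof -
  have congruent: "v a mod int n = v b mod int n"
    if "periodic_perm n v" "a mod int n = b mod int n" for v a b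
    using that periodic_perm_shift[OF that(1)] by (auto simp: mod_eq_iff_shift)
  have "inj u"
    using assms unfolding periodic_perm_def by (simp add: bij_is_inj)
  show ?thesis
  proof
    assume "u a mod int n = u b mod int n"
    from congruent[OF periodic_perm_inv[OF assms] this] \<open>inj u\<close>
    show "a mod int n = b mod int n"
      by simp
  qed (rule congruent[OF assms])
qed

lemma add_mod_neq:
  assumes "0 < d" "d < int n"
  shows "((x::int) + d) mod int n \<noteq> x mod int n"
proof
  assume "(x + d) mod int n = x mod int n"
  then have "int n dvd d"
    by (metis add_diff_cancel_left' mod_eq_dvd_iff)
  with assms show False
    using zdvd_imp_le by fastforce
qed

lemma succ_mod_neq: "n \<ge> 2 \<Longrightarrow> ((x::int) + 1) mod int n \<noteq> x mod int n"
  by (rule add_mod_neq) simp_all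

lemma succ_mod_eq_iff: "((x::int) + 1) mod int n = (y + 1) mod int n \<longleftrightarrow> x mod int n = y mod int n"
  by (simp add: mod_eq_dvd_iff)

section \<open>Simple reflections\<close>

lemma sref_sref:
  assumes "n \<ge> 2"
  shows "sref n i (sref n i x) = x"
proof -
  have "(x + 1) mod int n \<noteq> int i mod int n" if "x mod int n = int i mod int n"
    using succ_mod_neq[OF assms, of x] that by simp
  moreover have "(x - 1) mod int n = int i mod int n" if "x mod int n = (int i + 1) mod int n"
    using that by (metis add_diff_cancel_right' mod_diff_left_eq)
  moreover have "(x + 1) mod int n = (int i + 1) mod int n" if "x mod int n = int i mod int n"
    using that by (metis mod_add_left_eq)
  ultimately show ?thesis
    unfolding sref_def by auto
qed

lemma sref_comp_sref: "n \<ge> 2 \<Longrightarrow> sref n i \<circ> sref n i = id"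
  by (simp add: fun_eq_iff sref_sref)

lemma bij_sref: "n \<ge> 2 \<Longrightarrow> bij (sref n i)"
  by (metis o_bij sref_comp_sref)

lemma inv_sref: "n \<ge> 2 \<Longrightarrow> inv (sref n i) = sref n i"
  by (metis inv_unique_comp sref_comp_sref)

lemma periodic_perm_sref: "n \<ge> 2 \<Longrightarrow> periodic_perm n (sref n i)"
  unfolding periodic_perm_def by (simp add: bij_sref) (simp add: sref_def)

lemma sref_at: "sref n i (int i) = int i + 1"
  unfolding sref_def by simp

definition sref_swaps :: "nat \<Rightarrow> nat \<Rightarrow> int \<Rightarrow> int \<Rightarrow> bool" where
  "sref_swaps n i p q \<longleftrightarrow> (\<exists>k. {p, q} = {int i + k * int n, int i + k * int n + 1})"

lemma sref_swaps_commute: "sref_swaps n i p q = sref_swaps n i q p"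
  unfolding sref_swaps_def by (simp add: insert_commute)

lemma sref_swaps_less_iff:
  assumes "p < q"
  shows "sref_swaps n i p q \<longleftrightarrow> q = p + 1 \<and> p mod int n = int i mod int n"
proof
  assume "sref_swaps n i p q"
  then obtain k where "{p, q} = {int i + k * int n, int i + k * int n + 1}"
    unfolding sref_swaps_def by blast
  with assms have "p = int i + k * int n" "q = p + 1"
    by (auto simp: doubleton_eq_iff)
  then show "q = p + 1 \<and> p mod int n = int i mod int n"
    by simp
next
  assume q: "q = p + 1 \<and> p mod int n = int i mod int n"
  then obtain k where "p = int i + k * int n"
    using mod_eq_iff_shift[of "int i" n p] by auto
  with q show "sref_swaps n i p q"
    unfolding sref_swaps_def by (intro exI[of _ k]) simp
qed

lemma sref_less_if_not_swapped:
  assumes n: "n \<ge> 2" and "p < q" and "\<not> sref_swaps n i p q"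
  shows "sref n i p < sref n i q"
proof (cases "q = p + 1")
  case True
  then have "p mod int n \<noteq> int i mod int n"
    using assms sref_swaps_less_iff by blast
  with True n show ?thesis
    unfolding sref_def using succ_mod_eq_iff[of p n "int i"] by auto
next
  case False
  have "p + 2 < q" if "p mod int n = int i mod int n" "q mod int n = (int i + 1) mod int n"
  proof -
    have "(p + 2) mod int n \<noteq> (int i + 1) mod int n"
      using that(1) succ_mod_eq_iff[of "p + 1" n "int i"] succ_mod_neq[OF n, of p]
      by (auto simp: add.assoc)
    with that(2) False \<open>p < q\<close> show ?thesis
      by (cases "q = p + 2") auto
  qed
  with False \<open>p < q\<close> show ?thesis
    unfolding sref_def by auto
qed

lemma sref_less_iff:
  assumes n: "n \<ge> 2" and "p \<noteq> q"
  shows "sref n i p < sref n i q \<longleftrightarrow> (p < q) \<noteq> sref_swaps n i p q"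
proof -
  have swapped: "sref n i q < sref n i p" if "p < q" "sref_swaps n i p q" for p q
  proof -
    from that have "q = p + 1" "p mod int n = int i mod int n"
      using sref_swaps_less_iff by blast+
    with n show ?thesis
      unfolding sref_def using succ_mod_neq[OF n, of p] succ_mod_eq_iff[of p n "int i"] by auto
  qed
  show ?thesis
    using assms(2) sref_less_if_not_swapped[OF n] swapped sref_swaps_commute
    by (metis less_asym linorder_neqE)
qed

section \<open>Translation classes and inversion sets\<close>

lemma tcls_eq_iff: "tcls n S = tcls n T \<longleftrightarrow> (\<exists>k. S = (\<lambda>x. x + k * int n) ` T)"
proof
  assume "tcls n S = tcls n T"
  moreover have "S \<in> tcls n S"
    unfolding tcls_def by (auto intro!: exI[of _ 0])
  ultimately show "\<exists>k. S = (\<lambda>x. x + k * int n) ` T"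
    unfolding tcls_def by auto
next
  assume "\<exists>k. S = (\<lambda>x. x + k * int n) ` T"
  then obtain k where k: "S = (\<lambda>x. x + k * int n) ` T"
    by blast
  have "(\<lambda>x. x + j * int n) ` S = (\<lambda>x. x + (j + k) * int n) ` T"
    and "(\<lambda>x. x + j * int n) ` T = (\<lambda>x. x + (j - k) * int n) ` S" for j
    unfolding k image_image by (simp_all add: algebra_simps)
  then show "tcls n S = tcls n T"
    unfolding tcls_def by blast
qed

lemma tcls_pair_eq_iff:
  "tcls n {a, b} = tcls n {c, d} \<longleftrightarrow> (\<exists>k. {a, b} = {c + k * int n, d + k * int n})"
  unfolding tcls_eq_iff by simp

lemma tcls_ordered_pair_eq_iff:
  assumes "a < b" "c < d"
  shows "tcls n {a, b} = tcls n {c, d} \<longleftrightarrow> (\<exists>k. a = c + k * int n \<and> b = d + k * int n)"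
  unfolding tcls_pair_eq_iff using assms by (auto simp: doubleton_eq_iff)

lemma tcls_shift: "tcls n {a + k * int n, b + k * int n} = tcls n {a, b}"
  unfolding tcls_pair_eq_iff by blast

lemma distinct_lex3:
  assumes "x < y" "y < z" "x mod int n \<noteq> y mod int n"
  shows "distinct (lex3 n x y z)"
proof -
  have "tcls n {x, y} \<noteq> tcls n {x, z}"
  proof
    assume "tcls n {x, y} = tcls n {x, z}"
    then obtain k where "x = x + k * int n" "y = z + k * int n"
      using assms tcls_ordered_pair_eq_iff[of x y x z n] by auto
    with assms show False
      by simp
  qed
  moreover have "tcls n {x, z} \<noteq> tcls n {y, z}"
  proof
    assume "tcls n {x, z} = tcls n {y, z}"
    then obtain k where "x = y + k * int n" "z = z + k * int n"
      using assms tcls_ordered_pair_eq_iff[of x z y z n] by auto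
    with assms show False
      by simp
  qed
  moreover have "tcls n {x, y} \<noteq> tcls n {y, z}"
  proof
    assume "tcls n {x, y} = tcls n {y, z}"
    then obtain k where "x = y + k * int n"
      using assms tcls_ordered_pair_eq_iff[of x y y z n] by auto
    with assms show False
      by simp
  qed
  ultimately show ?thesis
    unfolding lex3_def by simp
qed

lemma tcls_neq_shift_right:
  assumes "n \<ge> 2" "x < y"
  shows "tcls n {x, y} \<noteq> tcls n {x, y + int n}"
proof
  assume "tcls n {x, y} = tcls n {x, y + int n}"
  then obtain k where "x = x + k * int n" "y = y + int n + k * int n"
    using assms tcls_ordered_pair_eq_iff[of x y x "y + int n" n] by auto
  with assms show False
    by simp
qed

lemma Inv2_elim:
  assumes "c \<in> Inv2 n u"
  obtains a b where "c = tcls n {a, b}" "a < b" "a mod int n \<noteq> b mod int n" "inv u b < inv u a"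
  using assms unfolding Inv2_def by auto

lemma Inv2I:
  "x < y \<Longrightarrow> x mod int n \<noteq> y mod int n \<Longrightarrow> inv u y < inv u x \<Longrightarrow> tcls n {x, y} \<in> Inv2 n u"
  unfolding Inv2_def by blast

lemma Inv2_mod_neq:
  assumes "tcls n {a, b} \<in> Inv2 n u"
  shows "a mod int n \<noteq> b mod int n"
proof -
  obtain x y where "tcls n {a, b} = tcls n {x, y}" "x mod int n \<noteq> y mod int n"
    using Inv2_elim[OF assms] by metis
  then obtain k where "{a, b} = {x + k * int n, y + k * int n}"
    unfolding tcls_pair_eq_iff by blast
  with \<open>x mod int n \<noteq> y mod int n\<close> show ?thesis
    by (auto simp: doubleton_eq_iff)
qed

lemma mem_Inv2_iff:
  assumes u: "periodic_perm n u" and ab: "a mod int n \<noteq> b mod int n"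
  shows "tcls n {a, b} \<in> Inv2 n u \<longleftrightarrow> (a < b \<longleftrightarrow> inv u b < inv u a)"
proof -
  have inv_shift: "inv u (x + k * int n) = inv u x + k * int n" for x k
    using periodic_perm_shift[OF periodic_perm_inv[OF u]] .
  have "inv u a \<noteq> inv u b"
    using u ab unfolding periodic_perm_def by (metis bij_inv_eq_iff)
  show ?thesis
  proof
    assume "tcls n {a, b} \<in> Inv2 n u"
    then obtain x y where "tcls n {a, b} = tcls n {x, y}" "x < y" "inv u y < inv u x"
      by (metis Inv2_elim)
    moreover from this(1) obtain k where "{a, b} = {x + k * int n, y + k * int n}"
      unfolding tcls_pair_eq_iff by blast
    ultimately show "a < b \<longleftrightarrow> inv u b < inv u a"
      using inv_shift by (auto simp: doubleton_eq_iff)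
  next
    assume "a < b \<longleftrightarrow> inv u b < inv u a"
    with ab \<open>inv u a \<noteq> inv u b\<close> show "tcls n {a, b} \<in> Inv2 n u"
      using Inv2I[of a b n u] Inv2I[of b a n u] by (metis insert_commute not_less_iff_gr_or_eq)
  qed
qed

lemma Inv2_id: "Inv2 n id = {}"
  unfolding Inv2_def by auto

lemma tcls_adjacent_eq_iff_sref_swaps:
  assumes u: "periodic_perm n u"
  shows "tcls n {a, b} = tcls n {u (int i), u (int i + 1)} \<longleftrightarrow> sref_swaps n i (inv u b) (inv u a)"
proof -
  have bij: "bij u"
    using u unfolding periodic_perm_def by blast
  have shift: "u (int i + k * int n) = u (int i) + k * int n"
    "u (int i + k * int n + 1) = u (int i + 1) + k * int n" for k
    using periodic_perm_shift[OF u, of "int i"] periodic_perm_shift[OF u, of "int i + 1"]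
    by (simp_all add: algebra_simps)
  have "a = u X \<longleftrightarrow> inv u a = X" "b = u X \<longleftrightarrow> inv u b = X" for X
    using bij_inv_eq_iff[OF bij] by metis+
  then have "{a, b} = {u X, u Y} \<longleftrightarrow> {inv u b, inv u a} = {X, Y}" for X Y
    by (auto simp: doubleton_eq_iff)
  then show ?thesis
    unfolding tcls_pair_eq_iff sref_swaps_def shift[symmetric] by simp
qed

lemma Inv2_comp_sref:
  assumes n: "n \<ge> 2" and u: "periodic_perm n u"
  shows "c \<in> Inv2 n (u \<circ> sref n i) \<longleftrightarrow> (c \<in> Inv2 n u) \<noteq> (c = tcls n {u (int i), u (int i + 1)})"
proof (cases "\<exists>a b. c = tcls n {a, b} \<and> a mod int n \<noteq> b mod int n")
  case True
  then obtain a b where c: "c = tcls n {a, b}" and ab: "a mod int n \<noteq> b mod int n"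
    by blast
  have bij: "bij u"
    using u unfolding periodic_perm_def by blast
  define p q where "p = inv u a" and "q = inv u b"
  have "p \<noteq> q"
    using ab bij unfolding p_def q_def by (metis bij_inv_eq_iff)
  have "inv (u \<circ> sref n i) = sref n i \<circ> inv u"
    using o_inv_distrib[OF bij bij_sref[OF n]] inv_sref[OF n] by simp
  then have new: "c \<in> Inv2 n (u \<circ> sref n i) \<longleftrightarrow> (a < b \<longleftrightarrow> sref n i q < sref n i p)"
    using mem_Inv2_iff[OF periodic_perm_comp[OF u periodic_perm_sref[OF n]] ab]
    unfolding c p_def q_def by simp
  have old: "c \<in> Inv2 n u \<longleftrightarrow> (a < b \<longleftrightarrow> q < p)"
    using mem_Inv2_iff[OF u ab] unfolding c p_def q_def by simp
  have toggled: "c = tcls n {u (int i), u (int i + 1)} \<longleftrightarrow> sref_swaps n i q p"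
    unfolding c p_def q_def by (rule tcls_adjacent_eq_iff_sref_swaps[OF u])
  show ?thesis
    unfolding new old toggled sref_less_iff[OF n \<open>p \<noteq> q\<close>[symmetric]] by argo
next
  case False
  then have "c \<notin> Inv2 n (u \<circ> sref n i)" "c \<notin> Inv2 n u"
    by (metis Inv2_elim)+
  moreover have "u (int i) mod int n \<noteq> u (int i + 1) mod int n"
    using periodic_perm_mod_eq_iff[OF u] succ_mod_neq[OF n] by metis
  ultimately show ?thesis
    using False by blast
qed

lemma Inv2_comp_sref_subset:
  assumes "n \<ge> 2" "periodic_perm n u"
  shows "Inv2 n (u \<circ> sref n i) \<subseteq> insert (tcls n {u (int i), u (int i + 1)}) (Inv2 n u)"
proof
  show "c \<in> insert (tcls n {u (int i), u (int i + 1)}) (Inv2 n u)" if "c \<in> Inv2 n (u \<circ> sref n i)" for c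
    using Inv2_comp_sref[OF assms, of c] that by auto
qed

lemma Inv2_comp_sref_insert:
  assumes "n \<ge> 2" "periodic_perm n u" "tcls n {u (int i), u (int i + 1)} \<notin> Inv2 n u"
  shows "Inv2 n (u \<circ> sref n i) = insert (tcls n {u (int i), u (int i + 1)}) (Inv2 n u)"
    (is "_ = ?rhs")
proof (rule set_eqI)
  show "c \<in> Inv2 n (u \<circ> sref n i) \<longleftrightarrow> c \<in> ?rhs" for c
    using Inv2_comp_sref[OF assms(1,2), of c] assms(3) by auto
qed

lemma Inv2_comp_sref_remove:
  assumes "n \<ge> 2" "periodic_perm n u" "tcls n {u (int i), u (int i + 1)} \<in> Inv2 n u"
  shows "Inv2 n (u \<circ> sref n i) = Inv2 n u - {tcls n {u (int i), u (int i + 1)}}"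
    (is "_ = ?rhs")
proof (rule set_eqI)
  show "c \<in> Inv2 n (u \<circ> sref n i) \<longleftrightarrow> c \<in> ?rhs" for c
    using Inv2_comp_sref[OF assms(1,2), of c] assms(3) by auto
qed

section \<open>Words, reflection sequences and inversion sets\<close>

lemma word_prod_Nil: "word_prod n [] = id"
  unfolding word_prod_def by simp

lemma word_prod_snoc: "word_prod n (vs @ [i]) = word_prod n vs \<circ> sref n i"
proof -
  have "foldr (\<lambda>i f. sref n i \<circ> f) vs g = foldr (\<lambda>i f. sref n i \<circ> f) vs id \<circ> g" for g
    by (induction vs) (auto simp: fun_eq_iff)
  then show ?thesis
    unfolding word_prod_def by simp
qed

lemma periodic_perm_word_prod: "n \<ge> 2 \<Longrightarrow> periodic_perm n (word_prod n ws)"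
  by (induction ws rule: rev_induct)
    (simp_all add: word_prod_Nil word_prod_snoc periodic_perm_id periodic_perm_comp periodic_perm_sref)

lemma is_word_snoc: "is_word n (vs @ [i]) \<longleftrightarrow> is_word n vs \<and> i < n"
  unfolding is_word_def by auto

lemma refl_seq_Nil: "refl_seq n [] = []"
  unfolding refl_seq_def by simp

lemma refl_seq_snoc:
  "refl_seq n (vs @ [i]) = refl_seq n vs @ [tcls n {word_prod n vs (int i), word_prod n vs (int i + 1)}]"
  unfolding refl_seq_def by (simp add: nth_append)

lemma length_refl_seq: "length (refl_seq n ws) = length ws"
  unfolding refl_seq_def by simp

lemma Inv2_word_prod_subset:
  assumes "n \<ge> 2"
  shows "Inv2 n (word_prod n ws) \<subseteq> set (refl_seq n ws)"
proof (induction ws rule: rev_induct)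
  case Nil
  show ?case
    unfolding word_prod_Nil Inv2_id by simp
next
  case (snoc i vs)
  have "Inv2 n (word_prod n (vs @ [i])) \<subseteq>
      insert (tcls n {word_prod n vs (int i), word_prod n vs (int i + 1)}) (Inv2 n (word_prod n vs))"
    unfolding word_prod_snoc by (rule Inv2_comp_sref_subset[OF assms periodic_perm_word_prod[OF assms]])
  with snoc.IH show ?case
    unfolding refl_seq_snoc by auto
qed

lemma card_Inv2_word_prod_le: "n \<ge> 2 \<Longrightarrow> card (Inv2 n (word_prod n ws)) \<le> length ws"
  using Inv2_word_prod_subset card_mono card_length length_refl_seq
  by (metis List.finite_set order_trans)

lemma set_refl_seq_if_distinct:
  assumes "n \<ge> 2"
  shows "distinct (refl_seq n ws) \<Longrightarrow> set (refl_seq n ws) = Inv2 n (word_prod n ws)"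
proof (induction ws rule: rev_induct)
  case Nil
  show ?case
    unfolding refl_seq_Nil word_prod_Nil Inv2_id by simp
next
  case (snoc i vs)
  let ?t = "tcls n {word_prod n vs (int i), word_prod n vs (int i + 1)}"
  from snoc.prems have "distinct (refl_seq n vs)" "?t \<notin> set (refl_seq n vs)"
    by (simp_all add: refl_seq_snoc)
  with snoc.IH have "set (refl_seq n vs) = Inv2 n (word_prod n vs)" "?t \<notin> Inv2 n (word_prod n vs)"
    by simp_all
  moreover have "Inv2 n (word_prod n (vs @ [i])) = insert ?t (Inv2 n (word_prod n vs))"
    unfolding word_prod_snoc
    by (rule Inv2_comp_sref_insert[OF assms periodic_perm_word_prod[OF assms]]) fact
  ultimately show ?case
    unfolding refl_seq_snoc by simp
qed

section \<open>Length and inversions\<close>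

lemma sum_periodic_window:
  fixes h :: "int \<Rightarrow> 'a::ab_group_add"
  assumes "m \<ge> 1" and periodic: "\<And>x. h (x + m) = h x"
  shows "sum h {a..a + m - 1} = sum h {1..m}"
proof -
  have step: "sum h {b + 1..b + m} = sum h {b..b + m - 1}" for b
  proof -
    have low: "{b..b + m} = insert b {b + 1..b + m}"
      and high: "{b..b + m} = insert (b + m) {b..b + m - 1}"
      using assms(1) by auto
    have "h b + sum h {b + 1..b + m} = sum h {b..b + m}"
      unfolding low by simp
    also have "\<dots> = h (b + m) + sum h {b..b + m - 1}"
      unfolding high by simp
    finally show ?thesis
      using periodic[of b] by simp
  qed
  show ?thesis
  proof (induction a rule: int_induct[where k = 1])
    case (step1 a)
    then show ?case
      using step[of a] by (simp add: algebra_simps)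
  next
    case (step2 a)
    then show ?case
      using step[of "a - 1"] by (simp add: algebra_simps)
  qed simp
qed

lemma sref_maps_window:
  assumes n: "n \<ge> 2" and "i < n" and x: "x \<in> {int i..int i + int n - 1}"
  shows "sref n i x \<in> {int i..int i + int n - 1}"
proof -
  have "x = int i" if congruent: "x mod int n = int i mod int n"
  proof -
    obtain k where k: "x = int i + k * int n"
      using mod_eq_iff_shift[of "int i" n x] congruent[symmetric] by blast
    with x have "0 \<le> k * int n" "k * int n < 1 * int n"
      by auto
    with n have "0 \<le> k" "k < 1"
      by (simp_all add: zero_le_mult_iff mult_less_cancel_right)
    with k show ?thesis
      by simp
  qed
  moreover have "x \<noteq> int i" if "x mod int n = (int i + 1) mod int n"
    using that succ_mod_neq[OF n, of "int i"] by auto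
  moreover have "int i + 1 \<le> int i + int n - 1"
    using n by simp
  ultimately show ?thesis
    using x unfolding sref_def by auto
qed

lemma sum_comp_sref:
  assumes n: "n \<ge> 2" and "i < n" and w: "periodic_perm n w"
  shows "(\<Sum>x = 1..int n. w (sref n i x)) = (\<Sum>x = 1..int n. w x)"
proof -
  define W where "W = {int i..int i + int n - 1}"
  have "bij_betw (sref n i) W W"
    by (rule bij_betw_byWitness[where f' = "sref n i"])
      (use sref_maps_window[OF n \<open>i < n\<close>] sref_sref[OF n] in \<open>auto simp: W_def\<close>)
  have window: "(\<Sum>x\<in>W. f x - x) = (\<Sum>x = 1..int n. f x - x)" if "periodic_perm n f" for f
    unfolding W_def using n periodic_perm_shift[OF that, of _ 1]
    by (intro sum_periodic_window) simp_all
  have "(\<Sum>x = 1..int n. w (sref n i x) - x) = (\<Sum>x\<in>W. w (sref n i x) - x)"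
    using window[OF periodic_perm_comp[OF w periodic_perm_sref[OF n]]] by simp
  also have "\<dots> = (\<Sum>x\<in>W. w x - x)"
    using \<open>bij_betw (sref n i) W W\<close> by (simp add: sum_subtractf sum.reindex_bij_betw)
  also have "\<dots> = (\<Sum>x = 1..int n. w x - x)"
    using window[OF w] .
  finally show ?thesis
    by (simp add: sum_subtractf)
qed

lemma affine_perm_comp_sref:
  assumes "n \<ge> 2" "i < n" "affine_perm n w"
  shows "affine_perm n (w \<circ> sref n i)"
  using periodic_perm_comp[OF affine_perm_imp_periodic_perm periodic_perm_sref]
    sum_comp_sref[OF _ _ affine_perm_imp_periodic_perm] assms
  unfolding affine_perm_def periodic_perm_def by simp

lemma strict_mono_surj_int_shift:
  fixes g :: "int \<Rightarrow> int"
  assumes "strict_mono g" "surj g"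
  shows "g x = x + g 0"
proof -
  have succ: "g (y + 1) = g y + 1" for y
  proof (rule ccontr)
    assume "g (y + 1) \<noteq> g y + 1"
    moreover have "g y < g (y + 1)"
      using assms(1) by (simp add: strict_mono_less)
    ultimately have "g y < g y + 1" "g y + 1 < g (y + 1)"
      by simp_all
    moreover obtain z where "g z = g y + 1"
      using assms(2) by (metis surjD)
    ultimately have "y < z" "z < y + 1"
      using assms(1) by (metis strict_mono_less)+
    then show False
      by simp
  qed
  show ?thesis
  proof (induction x rule: int_induct[where k = 0])
    case (step1 x)
    then show ?case
      using succ[of x] by simp
  next
    case (step2 x)
    then show ?case
      using succ[of "x - 1"] by simp
  qed simp
qed

lemma affine_perm_strict_mono_imp_id:
  assumes "affine_perm n w" "n \<ge> 1" "strict_mono w"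
  shows "w = id"
proof -
  define c where "c = w 0"
  have "bij w"
    using assms(1) unfolding affine_perm_def by blast
  then have w: "w x = x + c" for x
    unfolding c_def by (rule strict_mono_surj_int_shift[OF assms(3) bij_is_surj])
  have "(\<Sum>x = 1..int n. x) + int n * c = int n * (int n + 1) div 2"
    using assms(1) unfolding affine_perm_def w by (simp add: sum.distrib)
  moreover have "(\<Sum>x = 1..int n. x) = int n * (int n + 1) div 2"
    using Sum_Icc_int[of 1 "int n"] assms(2) by simp
  ultimately have "c = 0"
    using assms(2) by simp
  then show ?thesis
    using w by (simp add: fun_eq_iff)
qed

lemma strict_mono_if_Inv2_empty:
  assumes w: "periodic_perm n w" and "n \<ge> 1" and "Inv2 n w = {}"
  shows "strict_mono w"
proof (rule strict_monoI)
  fix x y :: int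
  assume "x < y"
  show "w x < w y"
  proof (cases "x mod int n = y mod int n")
    case True
    then obtain k where "y = x + k * int n"
      using mod_eq_iff_shift by blast
    with \<open>x < y\<close> \<open>n \<ge> 1\<close> show ?thesis
      using periodic_perm_shift[OF w, of x k] by (simp add: zero_less_mult_iff)
  next
    case False
    then have "w x mod int n \<noteq> w y mod int n"
      using periodic_perm_mod_eq_iff[OF w] by blast
    moreover have "inv w (w z) = z" for z
      using w unfolding periodic_perm_def by (simp add: bij_is_inj)
    ultimately show ?thesis
      using mem_Inv2_iff[OF w, of "w x" "w y"] \<open>x < y\<close> \<open>Inv2 n w = {}\<close> by auto
  qed
qed

lemma affine_perm_Inv2_empty_imp_id:
  assumes "affine_perm n w" "n \<ge> 1" "Inv2 n w = {}"
  shows "w = id"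
  using assms affine_perm_strict_mono_imp_id strict_mono_if_Inv2_empty affine_perm_imp_periodic_perm
  by blast

lemma strict_mono_if_no_descent:
  assumes w: "periodic_perm n w" and "n \<ge> 1" and ascent: "\<And>i. i < n \<Longrightarrow> w (int i) < w (int i + 1)"
  shows "strict_mono w"
proof -
  have succ: "w x < w (x + 1)" for x
  proof -
    define r k where "r = x mod int n" and "k = x div int n"
    have "x = r + k * int n"
      unfolding r_def k_def by simp
    moreover have "0 \<le> r" "r < int n"
      using \<open>n \<ge> 1\<close> unfolding r_def by simp_all
    then have "w r < w (r + 1)"
      using ascent[of "nat r"] by simp
    ultimately show ?thesis
      using periodic_perm_shift[OF w, of r k] periodic_perm_shift[OF w, of "r + 1" k]
      by (simp add: algebra_simps)
  qed
  have far: "w x < w (x + 1 + int d)" for x d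
  proof (induction d)
    case (Suc d)
    then show ?case
      using succ[of "x + 1 + int d"] by (simp add: algebra_simps)
  qed (simp add: succ)
  show ?thesis
  proof (rule strict_monoI)
    show "w x < w y" if "x < y" for x y
      using far[of x "nat (y - x - 1)"] that by simp
  qed
qed

lemma exists_descent:
  assumes n: "n \<ge> 2" and w: "affine_perm n w" and "Inv2 n w \<noteq> {}"
  obtains i where "i < n" "tcls n {w (int i), w (int i + 1)} \<in> Inv2 n w"
proof -
  have pw: "periodic_perm n w"
    using affine_perm_imp_periodic_perm[OF w] .
  have inv: "inv w (w z) = z" for z
    using pw unfolding periodic_perm_def by (simp add: bij_is_inj)
  have mods: "w (int i) mod int n \<noteq> w (int i + 1) mod int n" for i
    using periodic_perm_mod_eq_iff[OF pw] succ_mod_neq[OF n] by metis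
  then have neq: "w (int i) \<noteq> w (int i + 1)" for i
    by metis
  have "tcls n {w (int i), w (int i + 1)} \<in> Inv2 n w \<longleftrightarrow> w (int i + 1) < w (int i)" for i
    using mem_Inv2_iff[OF pw mods[of i]] inv neq[of i] by auto
  moreover have "\<exists>i<n. w (int i + 1) < w (int i)"
  proof (rule ccontr)
    assume "\<not> ?thesis"
    then have "w (int i) < w (int i + 1)" if "i < n" for i
      using that neq[of i] by auto
    then have "w = id"
      using affine_perm_strict_mono_imp_id[OF w] strict_mono_if_no_descent[OF pw] n by simp
    with \<open>Inv2 n w \<noteq> {}\<close> show False
      by (simp add: Inv2_id)
  qed
  ultimately show ?thesis
    using that by blast
qed

lemma exists_word_of_length_card_Inv2:
  assumes n: "n \<ge> 2"
  shows "affine_perm n w \<Longrightarrow> finite (Inv2 n w) \<Longrightarrow>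
    \<exists>ws. is_word n ws \<and> word_prod n ws = w \<and> length ws = card (Inv2 n w)"
proof (induction "card (Inv2 n w)" arbitrary: w)
  case 0
  then have "w = id"
    using affine_perm_Inv2_empty_imp_id n by simp
  with "0.hyps" show ?case
    by (intro exI[of _ "[]"]) (simp add: is_word_def word_prod_Nil)
next
  case (Suc N)
  then obtain i where i: "i < n" "tcls n {w (int i), w (int i + 1)} \<in> Inv2 n w"
    using exists_descent[OF n] by force
  define w' where "w' = w \<circ> sref n i"
  have Inv2_w': "Inv2 n w' = Inv2 n w - {tcls n {w (int i), w (int i + 1)}}"
    unfolding w'_def using Inv2_comp_sref_remove[OF n affine_perm_imp_periodic_perm] Suc.prems i
    by blast
  moreover have "affine_perm n w'"
    unfolding w'_def using affine_perm_comp_sref[OF n i(1) Suc.prems(1)] .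
  ultimately obtain ws where ws: "is_word n ws" "word_prod n ws = w'" "length ws = N"
    using Suc i by (metis card_Diff_singleton diff_Suc_1 finite_Diff)
  have "word_prod n (ws @ [i]) = w"
    unfolding word_prod_snoc ws(2) w'_def by (simp add: comp_assoc sref_comp_sref[OF n])
  with ws i Suc.hyps(2) show ?case
    by (intro exI[of _ "ws @ [i]"]) (simp add: is_word_snoc)
qed

lemma reduced_word_iff_distinct_refl_seq:
  assumes n: "n \<ge> 2" and w: "affine_perm n w" "finite (Inv2 n w)"
    and ws: "is_word n ws" "word_prod n ws = w"
  shows "reduced_word n w ws \<longleftrightarrow> distinct (refl_seq n ws)"
proof -
  have "length ws = card (Inv2 n w) \<longleftrightarrow> distinct (refl_seq n ws)"
  proof
    assume "length ws = card (Inv2 n w)"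
    moreover have "card (Inv2 n w) \<le> card (set (refl_seq n ws))"
      using Inv2_word_prod_subset[OF n, of ws] ws(2) by (simp add: card_mono)
    ultimately show "distinct (refl_seq n ws)"
      using card_length[of "refl_seq n ws"] by (intro card_distinct) (simp add: length_refl_seq)
  next
    assume "distinct (refl_seq n ws)"
    then show "length ws = card (Inv2 n w)"
      using set_refl_seq_if_distinct[OF n] distinct_card length_refl_seq ws(2) by metis
  qed
  moreover obtain vs where "is_word n vs" "word_prod n vs = w" "length vs = card (Inv2 n w)"
    using exists_word_of_length_card_Inv2[OF n w] by blast
  ultimately show ?thesis
    unfolding reduced_word_def using ws card_Inv2_word_prod_le[OF n] by (metis le_antisym)
qed

section \<open>Orders on the three pairs of a triple\<close>

definition prefix_or_rev_prefix :: "'a list \<Rightarrow> 'a list \<Rightarrow> bool" where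
  "prefix_or_rev_prefix R L \<longleftrightarrow> prefix R L \<or> prefix R (rev L)"

text \<open>With \<open>A = [x,y]\<close>, \<open>B = [x,z]\<close>, \<open>C = [y,z]\<close>: both \<open>I\<close> and its complement contain \<open>B\<close>
  as soon as they contain \<open>A\<close> and \<open>C\<close>.\<close>

definition biconvex3 :: "'a \<Rightarrow> 'a \<Rightarrow> 'a \<Rightarrow> 'a set \<Rightarrow> bool" where
  "biconvex3 A B C I \<longleftrightarrow> (B \<in> I \<longrightarrow> A \<in> I \<or> C \<in> I) \<and> (A \<in> I \<and> C \<in> I \<longrightarrow> B \<in> I)"

lemma biconvex3_Int: "biconvex3 A B C ({A, B, C} \<inter> I) \<longleftrightarrow> biconvex3 A B C I"
  unfolding biconvex3_def by blast

lemma biconvex3_if_prefix_or_rev_prefix: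
  "distinct [A, B, C] \<Longrightarrow> prefix_or_rev_prefix R [A, B, C] \<Longrightarrow> biconvex3 A B C (set R)"
  unfolding prefix_or_rev_prefix_def biconvex3_def by (auto simp: prefix_Cons)

lemma prefix_or_rev_prefix_snoc:
  assumes "distinct [A, B, C]" "prefix_or_rev_prefix R [A, B, C]"
    "t \<in> {A, B, C}" "t \<notin> set R" "biconvex3 A B C (insert t (set R))"
  shows "prefix_or_rev_prefix (R @ [t]) [A, B, C]"
  using assms unfolding prefix_or_rev_prefix_def biconvex3_def by (auto simp: prefix_Cons)

lemma Inv2_biconvex3:
  assumes u: "periodic_perm n u" and xyz: "x < y" "y < z"
    and mods: "x mod int n \<noteq> y mod int n" "x mod int n \<noteq> z mod int n" "y mod int n \<noteq> z mod int n"
  shows "biconvex3 (tcls n {x, y}) (tcls n {x, z}) (tcls n {y, z}) (Inv2 n u)"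
proof -
  have "inj (inv u)"
    using u unfolding periodic_perm_def by (simp add: bij_imp_bij_inv bij_is_inj)
  with xyz have "inv u y \<noteq> inv u x" "inv u y \<noteq> inv u z"
    by (auto dest: injD)
  with xyz show ?thesis
    unfolding biconvex3_def mem_Inv2_iff[OF u mods(1)] mem_Inv2_iff[OF u mods(2)]
      mem_Inv2_iff[OF u mods(3)]
    by auto
qed

lemma Inv2_unshift:
  assumes u: "periodic_perm n u" and "x < y" "x mod int n \<noteq> y mod int n"
    and "tcls n {x, y + int n} \<in> Inv2 n u"
  shows "tcls n {x, y} \<in> Inv2 n u"
proof -
  have "x mod int n \<noteq> (y + int n) mod int n"
    using assms(3) by simp
  with assms have "inv u (y + int n) < inv u x"
    using mem_Inv2_iff[OF u] by auto
  then have "inv u y < inv u x"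
    using periodic_perm_shift[OF periodic_perm_inv[OF u], of y 1] by simp
  with assms show ?thesis
    using mem_Inv2_iff[OF u] by auto
qed

definition triples_lex_or_antilex :: "nat \<Rightarrow> int set set list \<Rightarrow> bool" where
  "triples_lex_or_antilex n \<rho> \<longleftrightarrow>
    (\<forall>x y z. x < y \<and> y < z \<and> x mod int n \<noteq> y mod int n \<and> x mod int n \<noteq> z mod int n
       \<and> y mod int n \<noteq> z mod int n \<longrightarrow>
       prefix_or_rev_prefix (filter (\<lambda>c. c \<in> set (lex3 n x y z)) \<rho>) (lex3 n x y z))"

lemma ex_take_iff_prefix: "(\<exists>k\<le>length L. R = take k L) \<longleftrightarrow> prefix R L"
  by (metis prefix_def prefix_length_le append_eq_conv_conj take_is_prefix)

lemma cond_i_iff_triples_lex_or_antilex: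
  assumes "set \<rho> = Inv2 n w"
  shows "cond_i n w \<rho> \<longleftrightarrow> triples_lex_or_antilex n \<rho>"
proof -
  have "filter (\<lambda>c. c \<in> S \<inter> Inv2 n w) \<rho> = filter (\<lambda>c. c \<in> S) \<rho>" for S
    using assms by (intro filter_cong) auto
  moreover have "antilex3 n x y z = rev (lex3 n x y z)" "length (lex3 n x y z) = 3" for x y z
    unfolding lex3_def antilex3_def by simp_all
  ultimately show ?thesis
    unfolding cond_i_def triples_lex_or_antilex_def prefix_or_rev_prefix_def Let_def
    by (metis ex_take_iff_prefix length_rev)
qed

lemma triples_lex_or_antilex_appendD:
  "triples_lex_or_antilex n (\<rho> @ \<sigma>) \<Longrightarrow> triples_lex_or_antilex n \<rho>"
  unfolding triples_lex_or_antilex_def prefix_or_rev_prefix_def by (auto dest: append_prefixD)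

lemma biconvex3_if_triples_lex_or_antilex:
  assumes "triples_lex_or_antilex n \<rho>" and "x < y" "y < z"
    and "x mod int n \<noteq> y mod int n" "x mod int n \<noteq> z mod int n" "y mod int n \<noteq> z mod int n"
  shows "biconvex3 (tcls n {x, y}) (tcls n {x, z}) (tcls n {y, z}) (set \<rho>)"
proof -
  have "distinct (lex3 n x y z)"
    using assms distinct_lex3 by blast
  moreover have "prefix_or_rev_prefix (filter (\<lambda>c. c \<in> set (lex3 n x y z)) \<rho>) (lex3 n x y z)"
    using assms unfolding triples_lex_or_antilex_def by blast
  ultimately have "biconvex3 (tcls n {x, y}) (tcls n {x, z}) (tcls n {y, z})
      (set (filter (\<lambda>c. c \<in> set (lex3 n x y z)) \<rho>))"
    unfolding lex3_def by (rule biconvex3_if_prefix_or_rev_prefix)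
  moreover have "set (filter (\<lambda>c. c \<in> set (lex3 n x y z)) \<rho>) =
      {tcls n {x, y}, tcls n {x, z}, tcls n {y, z}} \<inter> set \<rho>"
    unfolding lex3_def by auto
  ultimately show ?thesis
    by (simp add: biconvex3_Int)
qed

section \<open>Reflection orders\<close>

lemma before_append: "before xs a b \<Longrightarrow> before (xs @ ys) a b"
  unfolding before_def by (metis length_append nth_append trans_less_add1 order.strict_trans)

lemma before_snoc: "a \<in> set xs \<Longrightarrow> before (xs @ [b]) a b"
  unfolding before_def by (metis in_set_conv_nth length_append_singleton lessI nth_append nth_append_length)

lemma not_before_last: "distinct (xs @ [c]) \<Longrightarrow> \<not> before (xs @ [c]) c d"
  unfolding before_def by (auto simp: nth_append nth_mem split: if_splits)

lemma before_butlast: "before (xs @ [c]) a b \<Longrightarrow> b \<noteq> c \<Longrightarrow> before xs a b"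
  unfolding before_def by (auto simp: nth_append less_Suc_eq split: if_splits)

lemma triples_lex_or_antilex_snoc:
  assumes u: "periodic_perm n u" and \<rho>: "set (\<rho> @ [t]) = Inv2 n u" "t \<notin> set \<rho>"
    and IH: "triples_lex_or_antilex n \<rho>"
  shows "triples_lex_or_antilex n (\<rho> @ [t])"
  unfolding triples_lex_or_antilex_def
proof (intro allI impI)
  fix x y z :: int
  assume xyz: "x < y \<and> y < z \<and> x mod int n \<noteq> y mod int n \<and> x mod int n \<noteq> z mod int n
     \<and> y mod int n \<noteq> z mod int n"
  define A B C where "A = tcls n {x, y}" and "B = tcls n {x, z}" and "C = tcls n {y, z}"
  have L: "lex3 n x y z = [A, B, C]"
    unfolding lex3_def A_def B_def C_def ..
  define R where "R = filter (\<lambda>c. c \<in> {A, B, C}) \<rho>"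
  have "prefix_or_rev_prefix (filter (\<lambda>c. c \<in> set (lex3 n x y z)) \<rho>) (lex3 n x y z)"
    using IH xyz unfolding triples_lex_or_antilex_def by blast
  then have R: "prefix_or_rev_prefix R [A, B, C]"
    unfolding R_def L by simp
  show "prefix_or_rev_prefix (filter (\<lambda>c. c \<in> set (lex3 n x y z)) (\<rho> @ [t])) (lex3 n x y z)"
  proof (cases "t \<in> {A, B, C}")
    case True
    have "insert t (set R) = {A, B, C} \<inter> Inv2 n u"
      using True \<rho>(1) unfolding R_def by auto
    moreover have "biconvex3 A B C (Inv2 n u)"
      unfolding A_def B_def C_def using u xyz by (intro Inv2_biconvex3) simp_all
    ultimately have "biconvex3 A B C (insert t (set R))"
      by (simp add: biconvex3_Int)
    moreover have "distinct [A, B, C]"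
      using distinct_lex3[of x y z n] xyz unfolding L by simp
    moreover have "t \<notin> set R"
      using \<rho>(2) unfolding R_def by simp
    ultimately have "prefix_or_rev_prefix (R @ [t]) [A, B, C]"
      using prefix_or_rev_prefix_snoc[OF _ R True] by blast
    with True show ?thesis
      unfolding R_def L by simp
  qed (use R in \<open>simp add: R_def L\<close>)
qed

lemma cond_ii_snoc:
  assumes n: "n \<ge> 2" and u: "periodic_perm n u"
    and \<rho>: "set \<rho> = Inv2 n u" and Inv2_u': "Inv2 n u' = insert t (Inv2 n u)"
    and IH: "cond_ii n u \<rho>"
  shows "cond_ii n u' (\<rho> @ [t])"
  unfolding cond_ii_def
proof (intro allI impI)
  fix x y :: int
  let ?a = "tcls n {x, y}" and ?b = "tcls n {x, y + int n}"
  assume xy: "x < y \<and> ?a \<in> Inv2 n u' \<and> ?b \<in> Inv2 n u'"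
  then have "x < y" and a: "?a \<in> insert t (Inv2 n u)" and b: "?b \<in> insert t (Inv2 n u)"
    unfolding Inv2_u' by simp_all
  have "?a \<in> Inv2 n u"
  proof (cases "?b \<in> Inv2 n u")
    case True
    have "x mod int n \<noteq> y mod int n"
      using Inv2_mod_neq[of n x y u'] xy by simp
    from \<open>x < y\<close> this True show ?thesis
      by (rule Inv2_unshift[OF u])
  next
    case False
    then have "?b = t"
      using b by simp
    with a tcls_neq_shift_right[OF n \<open>x < y\<close>] show ?thesis
      by simp
  qed
  show "before (\<rho> @ [t]) ?a ?b"
  proof (cases "?b \<in> Inv2 n u")
    case True
    with IH \<open>x < y\<close> \<open>?a \<in> Inv2 n u\<close> have "before \<rho> ?a ?b"
      unfolding cond_ii_def by blast
    then show ?thesis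
      by (rule before_append)
  next
    case False
    then have "?b = t"
      using b by simp
    with \<open>?a \<in> Inv2 n u\<close> show ?thesis
      unfolding \<rho>[symmetric] by (simp add: before_snoc)
  qed
qed

lemma refl_seq_conditions:
  assumes n: "n \<ge> 2"
  shows "distinct (refl_seq n ws) \<Longrightarrow>
    triples_lex_or_antilex n (refl_seq n ws) \<and> cond_ii n (word_prod n ws) (refl_seq n ws)"
proof (induction ws rule: rev_induct)
  case Nil
  show ?case
    unfolding refl_seq_Nil triples_lex_or_antilex_def prefix_or_rev_prefix_def cond_ii_def
      word_prod_Nil Inv2_id
    by simp
next
  case (snoc i vs)
  let ?t = "tcls n {word_prod n vs (int i), word_prod n vs (int i + 1)}"
  have \<rho>: "refl_seq n (vs @ [i]) = refl_seq n vs @ [?t]"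
    by (rule refl_seq_snoc)
  have "distinct (refl_seq n vs)" and fresh: "?t \<notin> set (refl_seq n vs)"
    using snoc.prems unfolding \<rho> by simp_all
  then have IH: "triples_lex_or_antilex n (refl_seq n vs)" "cond_ii n (word_prod n vs) (refl_seq n vs)"
    and old: "set (refl_seq n vs) = Inv2 n (word_prod n vs)"
    using snoc.IH set_refl_seq_if_distinct[OF n] by simp_all
  have new: "set (refl_seq n vs @ [?t]) = Inv2 n (word_prod n (vs @ [i]))"
    using set_refl_seq_if_distinct[OF n snoc.prems] unfolding \<rho> .
  with old have "Inv2 n (word_prod n (vs @ [i])) = insert ?t (Inv2 n (word_prod n vs))"
    by simp
  then show ?case
    unfolding \<rho> using triples_lex_or_antilex_snoc[OF periodic_perm_word_prod[OF n] new fresh IH(1)]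
      cond_ii_snoc[OF n periodic_perm_word_prod[OF n] old _ IH(2)] by blast
qed

lemma Inv2_remove_not_biconvex3:
  assumes w: "periodic_perm n w" and ab: "a < b" "a mod int n \<noteq> b mod int n"
    and e: "e mod int n \<noteq> a mod int n" "e mod int n \<noteq> b mod int n"
    and between: "inv w b < inv w e" "inv w e < inv w a"
  shows "\<exists>x y z. x < y \<and> y < z \<and> x mod int n \<noteq> y mod int n \<and> x mod int n \<noteq> z mod int n
    \<and> y mod int n \<noteq> z mod int n
    \<and> \<not> biconvex3 (tcls n {x, y}) (tcls n {x, z}) (tcls n {y, z}) (Inv2 n w - {tcls n {a, b}})"
proof -
  have ae: "a mod int n \<noteq> e mod int n" and be: "b mod int n \<noteq> e mod int n"
    using e by auto
  have "e \<noteq> a" "e \<noteq> b"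
    using e by auto
  then consider "e < a" | "a < e" "e < b" | "b < e"
    by linarith
  then show ?thesis
  proof cases
    case 1
    with ab e have "distinct (lex3 n e a b)"
      by (intro distinct_lex3)
    moreover have "tcls n {e, a} \<notin> Inv2 n w" "tcls n {e, b} \<in> Inv2 n w"
      using 1 ab mem_Inv2_iff[OF w e(1)] mem_Inv2_iff[OF w e(2)] between by simp_all
    ultimately show ?thesis
      using 1 ab e unfolding biconvex3_def lex3_def
      by (intro exI[of _ e] exI[of _ a] exI[of _ b]) auto
  next
    case 2
    with ae have "distinct (lex3 n a e b)"
      by (intro distinct_lex3)
    moreover have "tcls n {a, e} \<in> Inv2 n w" "tcls n {e, b} \<in> Inv2 n w"
      using 2 mem_Inv2_iff[OF w ae] mem_Inv2_iff[OF w e(2)] between by simp_all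
    ultimately show ?thesis
      using 2 ab ae e(2) unfolding biconvex3_def lex3_def
      by (intro exI[of _ a] exI[of _ e] exI[of _ b]) auto
  next
    case 3
    with ab have "distinct (lex3 n a b e)"
      by (intro distinct_lex3)
    moreover have "tcls n {a, e} \<in> Inv2 n w" "tcls n {b, e} \<notin> Inv2 n w"
      using 3 ab mem_Inv2_iff[OF w ae] mem_Inv2_iff[OF w be] between by simp_all
    ultimately show ?thesis
      using 3 ab ae be unfolding biconvex3_def lex3_def
      by (intro exI[of _ a] exI[of _ b] exI[of _ e]) auto
  qed
qed

lemma Inv2_remove_not_biconvex3_if_gap:
  assumes n: "n \<ge> 2" and w: "periodic_perm n w"
    and ab: "a < b" "a mod int n \<noteq> b mod int n"
    and gap: "inv w b + 2 \<le> inv w a" "inv w a < inv w b + int n"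
  shows "\<exists>x y z. x < y \<and> y < z \<and> x mod int n \<noteq> y mod int n \<and> x mod int n \<noteq> z mod int n
    \<and> y mod int n \<noteq> z mod int n
    \<and> \<not> biconvex3 (tcls n {x, y}) (tcls n {x, z}) (tcls n {y, z}) (Inv2 n w - {tcls n {a, b}})"
proof -
  define p e where "p = inv w b" and "e = w (p + 1)"
  have e: "inv w e = p + 1"
    using w unfolding e_def periodic_perm_def by (simp add: bij_is_inj)
  have "(p + 1) mod int n \<noteq> inv w a mod int n"
    using add_mod_neq[of "inv w a - (p + 1)" n "p + 1"] gap unfolding p_def by auto
  then have "e mod int n \<noteq> a mod int n"
    using periodic_perm_mod_eq_iff[OF periodic_perm_inv[OF w], of e a] e by simp
  moreover have "e mod int n \<noteq> b mod int n"
    using periodic_perm_mod_eq_iff[OF periodic_perm_inv[OF w], of e b] e succ_mod_neq[OF n, of p]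
    unfolding p_def by simp
  moreover have "inv w b < inv w e" "inv w e < inv w a"
    using e gap unfolding p_def by simp_all
  ultimately show ?thesis
    by (rule Inv2_remove_not_biconvex3[OF w ab])
qed

lemma mem_Inv2_shift_right:
  assumes w: "periodic_perm n w" and "a < b" "a mod int n \<noteq> b mod int n"
    and "inv w b + int n < inv w a"
  shows "tcls n {a, b + int n} \<in> Inv2 n w"
proof -
  have "a mod int n \<noteq> (b + int n) mod int n"
    using assms(3) by simp
  moreover have "inv w (b + int n) = inv w b + int n"
    using periodic_perm_shift[OF periodic_perm_inv[OF w], of b 1] by simp
  ultimately show ?thesis
    using assms mem_Inv2_iff[OF w] by simp
qed

text \<open>A gap larger than \<open>n\<close> between the positions of \<open>b\<close> and \<open>a\<close> contradicts (ii) through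
  \<open>[a, b+n]\<close>, a gap of exactly \<open>n\<close> would force \<open>a = b + n\<close>, and any other gap of at least 2
  contradicts (i) through the triple formed with \<open>w(w\<^sup>-\<^sup>1(b) + 1)\<close>.\<close>

lemma last_reflection_is_descent:
  assumes n: "n \<ge> 2" and w: "periodic_perm n w"
    and \<rho>: "distinct (\<rho> @ [c])" "set (\<rho> @ [c]) = Inv2 n w"
      "triples_lex_or_antilex n \<rho>" "cond_ii n w (\<rho> @ [c])"
    and c: "c = tcls n {a, b}" "a < b" "inv w b < inv w a"
  shows "inv w a = inv w b + 1"
proof (rule ccontr)
  assume "inv w a \<noteq> inv w b + 1"
  with c have gap: "inv w b + 2 \<le> inv w a"
    by simp
  have "c \<in> Inv2 n w"
    using \<rho>(2) by auto
  then have ab: "a mod int n \<noteq> b mod int n"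
    using Inv2_mod_neq c(1) by blast
  consider "inv w b + int n < inv w a" | "inv w a = inv w b + int n" | "inv w a < inv w b + int n"
    by linarith
  then show False
  proof cases
    case 1
    then have "tcls n {a, b + int n} \<in> Inv2 n w"
      using mem_Inv2_shift_right[OF w c(2) ab] by blast
    with \<open>c \<in> Inv2 n w\<close> c \<rho>(4) have "before (\<rho> @ [c]) c (tcls n {a, b + int n})"
      unfolding cond_ii_def by blast
    with \<rho>(1) show False
      using not_before_last by metis
  next
    case 2
    have "w (inv w a) = a" "w (inv w b) = b"
      using w unfolding periodic_perm_def by (simp_all add: bij_is_surj surj_f_inv_f)
    with 2 have "a = b + int n"
      using periodic_perm_shift[OF w, of "inv w b" 1] by simp
    with c n show False
      by simp
  next
    case 3
    obtain x y z where "x < y" "y < z" "x mod int n \<noteq> y mod int n" "x mod int n \<noteq> z mod int n"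
      "y mod int n \<noteq> z mod int n"
      and "\<not> biconvex3 (tcls n {x, y}) (tcls n {x, z}) (tcls n {y, z}) (Inv2 n w - {c})"
      using Inv2_remove_not_biconvex3_if_gap[OF n w c(2) ab gap 3] c(1) by blast
    moreover have "set \<rho> = Inv2 n w - {c}"
      using \<rho>(1,2) by auto
    ultimately show False
      using biconvex3_if_triples_lex_or_antilex[OF \<rho>(3)] by metis
  qed
qed

lemma tcls_adjacent_mod:
  assumes w: "periodic_perm n w" and "n \<ge> 1"
  shows "tcls n {w p, w (p + 1)} = tcls n {w (int (nat (p mod int n))), w (int (nat (p mod int n)) + 1)}"
proof -
  define r k where "r = p mod int n" and "k = p div int n"
  have "p = r + k * int n" "int (nat r) = r"
    using \<open>n \<ge> 1\<close> unfolding r_def k_def by simp_all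
  moreover from this have "w p = w r + k * int n" "w (p + 1) = w (r + 1) + k * int n"
    using periodic_perm_shift[OF w, of r k] periodic_perm_shift[OF w, of "r + 1" k]
    by (simp_all add: algebra_simps)
  ultimately show ?thesis
    using tcls_shift[of n "w r" k "w (r + 1)"] unfolding r_def[symmetric] by simp
qed

lemma last_reflection_of_descent:
  assumes n: "n \<ge> 2" and w: "periodic_perm n w"
    and \<rho>: "distinct (\<rho> @ [c])" "set (\<rho> @ [c]) = Inv2 n w"
      "triples_lex_or_antilex n \<rho>" "cond_ii n w (\<rho> @ [c])"
  obtains i where "i < n" "c = tcls n {w (int i), w (int i + 1)}"
proof -
  have "c \<in> Inv2 n w"
    using \<rho>(2) by auto
  then obtain a b where ab: "c = tcls n {a, b}" "a < b" "inv w b < inv w a"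
    by (metis Inv2_elim)
  define p i where "p = inv w b" and "i = nat (p mod int n)"
  have "inv w a = p + 1"
    unfolding p_def using last_reflection_is_descent[OF n w \<rho> ab] .
  then have "w p = b" "w (p + 1) = a"
    using w unfolding p_def periodic_perm_def by (metis bij_inv_eq_iff)+
  then have "c = tcls n {w (int i), w (int i + 1)}"
    using tcls_adjacent_mod[OF w, of p] n ab(1) unfolding i_def by (simp add: insert_commute)
  moreover have "i < n"
    using n unfolding i_def by (simp add: nat_less_iff)
  ultimately show ?thesis
    using that by blast
qed

lemma cond_ii_butlast:
  assumes "cond_ii n w (\<rho> @ [c])" "Inv2 n w' = Inv2 n w - {c}"
  shows "cond_ii n w' \<rho>"
  unfolding cond_ii_def
proof (intro allI impI)
  fix x y
  assume xy: "x < y \<and> tcls n {x, y} \<in> Inv2 n w' \<and> tcls n {x, y + int n} \<in> Inv2 n w'"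
  with assms(2) have "x < y \<and> tcls n {x, y} \<in> Inv2 n w \<and> tcls n {x, y + int n} \<in> Inv2 n w"
    by simp
  with assms(1) have "before (\<rho> @ [c]) (tcls n {x, y}) (tcls n {x, y + int n})"
    unfolding cond_ii_def by blast
  moreover have "tcls n {x, y + int n} \<noteq> c"
    using xy assms(2) by simp
  ultimately show "before \<rho> (tcls n {x, y}) (tcls n {x, y + int n})"
    by (rule before_butlast)
qed

lemma exists_word_with_refl_seq:
  assumes n: "n \<ge> 2"
  shows "affine_perm n w \<Longrightarrow> distinct \<rho> \<Longrightarrow> set \<rho> = Inv2 n w \<Longrightarrow> triples_lex_or_antilex n \<rho> \<Longrightarrow>
    cond_ii n w \<rho> \<Longrightarrow> \<exists>ws. is_word n ws \<and> word_prod n ws = w \<and> refl_seq n ws = \<rho>"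
proof (induction \<rho> arbitrary: w rule: rev_induct)
  case Nil
  then have "w = id"
    using affine_perm_Inv2_empty_imp_id n by simp
  then show ?case
    by (intro exI[of _ "[]"]) (simp add: is_word_def word_prod_Nil refl_seq_Nil)
next
  case (snoc c \<rho>)
  have w: "periodic_perm n w"
    using affine_perm_imp_periodic_perm[OF snoc.prems(1)] .
  have "c \<in> Inv2 n w"
    using snoc.prems(3) by auto
  obtain i where "i < n" and c: "c = tcls n {w (int i), w (int i + 1)}"
    by (rule last_reflection_of_descent[OF n w snoc.prems(2,3)
          triples_lex_or_antilex_appendD[OF snoc.prems(4)] snoc.prems(5)])
  define w' where "w' = w \<circ> sref n i"
  have Inv2_w': "Inv2 n w' = Inv2 n w - {c}"
    unfolding w'_def c using Inv2_comp_sref_remove[OF n w] \<open>c \<in> Inv2 n w\<close> c by simp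
  have "affine_perm n w'"
    unfolding w'_def by (rule affine_perm_comp_sref[OF n \<open>i < n\<close> snoc.prems(1)])
  moreover have "distinct \<rho>" "set \<rho> = Inv2 n w'"
    using snoc.prems(2,3) Inv2_w' by auto
  moreover have "triples_lex_or_antilex n \<rho>"
    using triples_lex_or_antilex_appendD[OF snoc.prems(4)] .
  moreover have "cond_ii n w' \<rho>"
    using cond_ii_butlast[OF snoc.prems(5) Inv2_w'] .
  ultimately obtain ws where ws: "is_word n ws" "word_prod n ws = w'" "refl_seq n ws = \<rho>"
    using snoc.IH by blast
  have "word_prod n (ws @ [i]) = w"
    unfolding word_prod_snoc ws(2) w'_def by (simp add: comp_assoc sref_comp_sref[OF n])
  moreover have "refl_seq n (ws @ [i]) = \<rho> @ [c]"
    using sref_at[of n i] sref_sref[OF n, of i "int i"]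
    unfolding refl_seq_snoc ws(2,3) c w'_def by (simp add: insert_commute)
  ultimately show ?case
    using ws(1) \<open>i < n\<close> by (intro exI[of _ "ws @ [i]"]) (simp add: is_word_snoc)
qed

theorem corollary4p2:
  fixes n :: nat and w :: "int \<Rightarrow> int" and \<rho> :: "int set set list"
  assumes "n \<ge> 2" and "affine_perm n w" and "total_order_of (Inv2 n w) \<rho>"
  shows "reflection_order n w \<rho> \<longleftrightarrow> cond_i n w \<rho> \<and> cond_ii n w \<rho>"
proof -
  have \<rho>: "distinct \<rho>" "set \<rho> = Inv2 n w"
    using assms(3) unfolding total_order_of_def by auto
  have fin: "finite (Inv2 n w)"
    unfolding \<rho>(2)[symmetric] by (rule finite_set)
  show ?thesis
  proof
    assume "reflection_order n w \<rho>"
    then obtain ws where "reduced_word n w ws" and \<rho>_ws: "\<rho> = refl_seq n ws"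
      unfolding reflection_order_def by blast
    moreover from this have ws: "is_word n ws" "word_prod n ws = w"
      unfolding reduced_word_def by auto
    ultimately have "distinct (refl_seq n ws)"
      using reduced_word_iff_distinct_refl_seq[OF assms(1,2) fin] by blast
    then show "cond_i n w \<rho> \<and> cond_ii n w \<rho>"
      using cond_i_iff_triples_lex_or_antilex[OF \<rho>(2)] refl_seq_conditions[OF assms(1)]
      unfolding \<rho>_ws ws(2)[symmetric] by blast
  next
    assume "cond_i n w \<rho> \<and> cond_ii n w \<rho>"
    then obtain ws where "is_word n ws" "word_prod n ws = w" "refl_seq n ws = \<rho>"
      using exists_word_with_refl_seq[OF assms(1,2) \<rho>] cond_i_iff_triples_lex_or_antilex[OF \<rho>(2)]
      by blast
    with \<rho>(1) show "reflection_order n w \<rho>"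
      unfolding reflection_order_def
      using reduced_word_iff_distinct_refl_seq[OF assms(1,2) fin] by blast
  qed
qed

end
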